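(* For $\sigma,\alpha,\beta,\nu>0$ define, for $x>0$, $$f(x;\sigma,\alpha,\beta,\nu)=\frac{\nu x^{\nu-1}}{\sigma^{\nu}\,\Gamma\left(\frac{\alpha+\nu}{\beta}\right)}\,\Gamma\left(\frac{\alpha}{\beta},\left(\frac{x}{\sigma}\right)^{\beta}\right).$$ If $\sigma_1,\sigma_2,\alpha_1,\alpha_2,\beta_1,\beta_2,\nu_1,\nu_2>0$ satisfy $f(x;\sigma_1,\alpha_1,\beta_1,\nu_1)=f(x;\sigma_2,\alpha_2,\beta_2,\nu_2)$ for all $x>0$, then $\sigma_1=\sigma_2$, $\alpha_1=\alpha_2$, $\beta_1=\beta_2$ and $\nu_1=\nu_2$.
   Context: $\Gamma(a,y)=\int_y^\infty t^{a-1}e^{-t}\,dt$ denotes the upper incomplete gamma function. $f(\cdot;\sigma,\alpha,\beta,\nu)$ is the density of the scaled flexible interpretable gamma (FIG) distribution. *)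

theory Defs
  imports "HOL-Analysis.Analysis"
begin

definition upper_inc_Gamma :: "real \<Rightarrow> real \<Rightarrow> real" where
  "upper_inc_Gamma a y = (LINT t:{y..}|lborel. t powr (a - 1) * exp (- t))"

definition fig_density :: "real \<Rightarrow> real \<Rightarrow> real \<Rightarrow> real \<Rightarrow> real \<Rightarrow> real" where
  "fig_density x \<sigma> \<alpha> \<beta> \<nu> =
     \<nu> * x powr (\<nu> - 1) / (\<sigma> powr \<nu> * Gamma ((\<alpha> + \<nu>) / \<beta>))
       * upper_inc_Gamma (\<alpha> / \<beta>) ((x / \<sigma>) powr \<beta>)"

end

theory Submission
  imports Defs
begin

text \<open>Near 0 the incomplete gamma factor of the density stays between the positive constants
  \<open>\<Gamma>(\<alpha>/\<beta>, 1)\<close> and \<open>\<Gamma>(\<alpha>/\<beta>)\<close>, so the power \<open>x^(\<nu> - 1)\<close> in front of it, hence \<open>\<nu>\<close>, is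
  read off at 0. Once \<open>\<nu>\<close> agrees, the factors \<open>\<Gamma>(\<alpha>/\<beta>, (x/\<sigma>)^\<beta>)\<close> agree up to a constant;
  differentiating removes the incomplete gamma function and leaves \<open>K x^(\<alpha> - 1) exp (-(x/\<sigma>)^\<beta>)\<close>,
  whose logarithmic derivative times \<open>x\<close> is \<open>\<alpha> - 1 - \<beta> \<sigma>^(-\<beta>) x^\<beta>\<close>. An identity
  \<open>d\<^sub>1 - k\<^sub>1 x^b\<^sub>1 = d\<^sub>2 - k\<^sub>2 x^b\<^sub>2\<close> on \<open>(0, \<infinity>)\<close> forces \<open>b\<close>, \<open>k\<close> and \<open>d\<close> to agree, which gives
  \<open>\<beta>\<close>, then \<open>\<sigma>\<close>, then \<open>\<alpha>\<close>.\<close>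

definition Gamma_integrand :: "real \<Rightarrow> real \<Rightarrow> real" where
  "Gamma_integrand a t = t powr (a - 1) * exp (- t)"

lemma Gamma_integrand_nonneg: "0 \<le> Gamma_integrand a t"
  by (simp add: Gamma_integrand_def)

lemma Gamma_integrand_continuous_on: "0 < y \<Longrightarrow> continuous_on {y..z} (Gamma_integrand a)"
  unfolding Gamma_integrand_def by (intro continuous_intros) auto

lemma Gamma_integrand_has_integral:
  assumes "a > 0"
  shows "(Gamma_integrand a has_integral Gamma a) {0..}"
proof -
  have "Gamma_integrand a = (\<lambda>t. t powr (a - 1) / exp t)"
    by (simp add: fun_eq_iff Gamma_integrand_def exp_minus divide_inverse)
  then show ?thesis using Gamma_integral_real[OF assms] by simp
qed

lemma Gamma_integrand_integrable_on:
  assumes "a > 0" "0 \<le> y"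
  shows "Gamma_integrand a absolutely_integrable_on {y..}"
    and "Gamma_integrand a integrable_on {y..}"
proof -
  have "Gamma_integrand a absolutely_integrable_on {0..}"
    using Gamma_integrand_has_integral[OF assms(1)] Gamma_integrand_nonneg
    by (auto simp: absolutely_integrable_on_iff_nonneg has_integral_integrable)
  then show *: "Gamma_integrand a absolutely_integrable_on {y..}"
    by (rule set_integrable_subset) (use assms in auto)
  from * show "Gamma_integrand a integrable_on {y..}"
    by (rule set_lebesgue_integral_eq_integral(1))
qed

lemma upper_inc_Gamma_eq_integral:
  assumes "a > 0" "0 \<le> y"
  shows "upper_inc_Gamma a y = integral {y..} (Gamma_integrand a)"
proof -
  have "set_integrable lborel {y..} (Gamma_integrand a)"
    using Gamma_integrand_integrable_on(1)[OF assms]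
    by (simp add: set_integrable_def integrable_completion Gamma_integrand_def)
  then show ?thesis
    unfolding upper_inc_Gamma_def Gamma_integrand_def[symmetric]
    by (rule set_borel_integral_eq_integral(2))
qed

lemma upper_inc_Gamma_split:
  assumes "a > 0" "0 \<le> y" "y \<le> z"
  shows "upper_inc_Gamma a y = integral {y..z} (Gamma_integrand a) + upper_inc_Gamma a z"
proof -
  have "(Gamma_integrand a has_integral integral {y..z} (Gamma_integrand a) + integral {z..} (Gamma_integrand a))
          ({y..z} \<union> {z..})"
    using assms
    by (intro has_integral_Un integrable_integral Gamma_integrand_integrable_on(2)
        integrable_on_subinterval[OF Gamma_integrand_integrable_on(2)]) auto
  moreover have "{y..z} \<union> {z..} = {y..}" using assms by auto
  ultimately show ?thesis
    using assms by (simp add: upper_inc_Gamma_eq_integral integral_unique)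
qed

lemma upper_inc_Gamma_antimono:
  assumes "a > 0" "0 \<le> y" "y \<le> z"
  shows "upper_inc_Gamma a z \<le> upper_inc_Gamma a y"
proof -
  have "Gamma_integrand a integrable_on {y..z}"
    by (rule integrable_on_subinterval[OF Gamma_integrand_integrable_on(2)[OF assms(1,2)]]) auto
  then have "0 \<le> integral {y..z} (Gamma_integrand a)"
    by (rule integral_nonneg) (simp add: Gamma_integrand_nonneg)
  then show ?thesis using upper_inc_Gamma_split[OF assms] by simp
qed

lemma upper_inc_Gamma_pos:
  assumes "a > 0" "0 \<le> y"
  shows "0 < upper_inc_Gamma a y"
proof -
  have "integral {y+1..y+2} (\<lambda>_. 0) < integral {y+1..y+2} (Gamma_integrand a)"
    using assms by (intro integral_less_real Gamma_integrand_continuous_on) (auto simp: Gamma_integrand_def)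
  moreover have "0 \<le> upper_inc_Gamma a (y+2)"
    using assms by (simp add: upper_inc_Gamma_eq_integral integral_nonneg Gamma_integrand_nonneg
        Gamma_integrand_integrable_on(2))
  ultimately have "0 < upper_inc_Gamma a (y+1)"
    using upper_inc_Gamma_split[OF assms(1), of "y+1" "y+2"] assms by simp
  then show ?thesis
    using upper_inc_Gamma_antimono[OF assms, of "y+1"] by simp
qed

lemma upper_inc_Gamma_has_real_derivative:
  assumes "a > 0" "y > 0"
  shows "(upper_inc_Gamma a has_real_derivative - Gamma_integrand a y) (at y)"
proof -
  define c where "c = y / 2"
  have c: "0 < c" "c < y" using assms by (auto simp: c_def)
  have "((\<lambda>u. upper_inc_Gamma a c - integral {c..u} (Gamma_integrand a)) has_real_derivative 0 - Gamma_integrand a y)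
          (at y within {c..2*y})"
    by (intro derivative_intros integral_has_real_derivative Gamma_integrand_continuous_on) (use c in auto)
  then have "((\<lambda>u. upper_inc_Gamma a c - integral {c..u} (Gamma_integrand a)) has_real_derivative - Gamma_integrand a y)
          (at y)"
    using c by (simp add: at_within_Icc_at)
  then show ?thesis
  proof (rule has_field_derivative_transform_within_open[where S="{c<..}"])
    fix u assume "u \<in> {c<..}"
    then show "upper_inc_Gamma a c - integral {c..u} (Gamma_integrand a) = upper_inc_Gamma a u"
      using upper_inc_Gamma_split[OF assms(1), of c u] c by simp
  qed (use c in auto)
qed

lemma has_real_derivative_unique_on_open:
  assumes "open S" "x \<in> S" "\<forall>y\<in>S. f y = g y"
    and "(f has_real_derivative f') (at x)" "(g has_real_derivative g') (at x)"
  shows "f' = g'"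
proof -
  from assms(5) have "(f has_real_derivative g') (at x)"
    by (rule has_field_derivative_transform_within_open[where S=S]) (use assms(1-3) in auto)
  with assms(4) show ?thesis by (rule DERIV_unique)
qed

lemma powr_exponent_le_at_right_0:
  fixes p q m M :: real
  assumes "\<forall>\<^sub>F x in at_right 0. x powr p * g x = x powr q * k x"
    and "\<forall>\<^sub>F x in at_right 0. \<bar>g x\<bar> \<le> M"
    and "\<forall>\<^sub>F x in at_right 0. m \<le> k x" "m > 0"
  shows "p \<le> q"
proof (rule ccontr)
  assume "\<not> p \<le> q"
  then have "((\<lambda>x. x powr (p - q) * M) \<longlongrightarrow> 0 * M) (at_right 0)"
    by (intro tendsto_intros tendsto_zero_powrI)
      (auto intro: tendsto_ident_at eventually_mono[OF eventually_at_right_less])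
  then have "\<forall>\<^sub>F x in at_right 0. x powr (p - q) * M < m"
    using \<open>m > 0\<close> by (simp add: order_tendstoD(2))
  with assms(1-3) eventually_at_right_less[of 0] have "\<forall>\<^sub>F x::real in at_right 0. False"
  proof eventually_elim
    case (elim x)
    then have "k x = x powr (p - q) * g x"
      by (simp add: powr_diff field_simps)
    then have "\<bar>k x\<bar> \<le> x powr (p - q) * M"
      using elim by (simp add: abs_mult mult_left_mono)
    with elim show False by linarith
  qed
  then show False by simp
qed

lemma affine_powr_eq_imp_eq:
  fixes b1 b2 k1 k2 d1 d2 :: real
  assumes "k1 \<noteq> 0" "b1 \<noteq> 0" and eq: "\<forall>x>0. d1 - k1 * x powr b1 = d2 - k2 * x powr b2"
  shows "b1 = b2 \<and> k1 = k2 \<and> d1 = d2"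
proof -
  define u v where "u = 2 powr b1" and "v = 2 powr b2"
  have sq: "4 powr b = (2 powr b)\<^sup>2" for b :: real
    using powr_mult[of 2 2 b] by (simp add: power2_eq_square)
  have at1: "d1 - k1 = d2 - k2" using eq[rule_format, of 1] by simp
  have "d1 - k1 * u = d2 - k2 * v" using eq[rule_format, of 2] by (simp add: u_def v_def)
  with at1 have lin: "k1 * (u - 1) = k2 * (v - 1)" by (simp add: algebra_simps)
  have "d1 - k1 * u\<^sup>2 = d2 - k2 * v\<^sup>2" using eq[rule_format, of 4] by (simp add: u_def v_def sq)
  with at1 have quad: "k1 * (u - 1) * (u + 1) = k2 * (v - 1) * (v + 1)"
    by (simp add: algebra_simps power2_eq_square)
  have "u \<noteq> 1" using \<open>b1 \<noteq> 0\<close> powr_inj[of 2 b1 0] by (simp add: u_def v_def)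
  then have "k1 * (u - 1) \<noteq> 0" using \<open>k1 \<noteq> 0\<close> by simp
  with lin quad have "u = v" by (metis add_right_cancel mult_left_cancel)
  then have "b1 = b2" by (simp add: u_def v_def powr_inj)
  moreover have "k1 = k2" using lin \<open>u = v\<close> \<open>u \<noteq> 1\<close> by simp
  ultimately show ?thesis using at1 by simp
qed

lemma powr_exp_kernel_eq_imp_log_derivative_eq:
  fixes K1 K2 a1 a2 b1 b2 c1 c2 :: real
  assumes "K1 > 0" "K2 > 0"
    and eq: "\<forall>x>0. K1 * x powr a1 * exp (- c1 * x powr b1) = K2 * x powr a2 * exp (- c2 * x powr b2)"
  shows "\<forall>x>0. a1 - c1 * b1 * x powr b1 = a2 - c2 * b2 * x powr b2"
proof -
  define L where "L K a c b x = ln K + a * ln x - c * x powr b" for K a c b x :: real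
  have ln_kernel: "ln (K * x powr a * exp (- c * x powr b)) = L K a c b x" if "K > 0" "x > 0" for K a c b x
    using that by (simp add: L_def ln_mult ln_powr)
  have L_deriv: "(L K a c b has_real_derivative (a - c * b * x powr b) / x) (at x)" if "x > 0" for K a c b x
  proof -
    have "(L K a c b has_real_derivative a * inverse x - c * (b * x powr (b - 1))) (at x)"
      unfolding L_def using that by (auto intro!: derivative_eq_intros simp: divide_inverse)
    moreover have "x powr (b - 1) = x powr b / x"
      using that by (simp add: powr_diff)
    ultimately show ?thesis
      using that by (simp add: field_simps)
  qed
  show ?thesis
  proof (intro allI impI)
    fix x :: real assume "x > 0"
    have "\<forall>y\<in>{0<..}. L K1 a1 c1 b1 y = L K2 a2 c2 b2 y"
      using eq assms(1,2) ln_kernel by (metis greaterThan_iff)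
    then have "(a1 - c1 * b1 * x powr b1) / x = (a2 - c2 * b2 * x powr b2) / x"
      using \<open>x > 0\<close> by (intro has_real_derivative_unique_on_open[OF _ _ _ L_deriv L_deriv]) auto
    then show "a1 - c1 * b1 * x powr b1 = a2 - c2 * b2 * x powr b2"
      using \<open>x > 0\<close> by simp
  qed
qed

definition fig_norm :: "real \<Rightarrow> real \<Rightarrow> real \<Rightarrow> real \<Rightarrow> real" where
  "fig_norm \<sigma> \<alpha> \<beta> \<nu> = \<nu> / (\<sigma> powr \<nu> * Gamma ((\<alpha> + \<nu>) / \<beta>))"

definition fig_tail :: "real \<Rightarrow> real \<Rightarrow> real \<Rightarrow> real \<Rightarrow> real" where
  "fig_tail x \<sigma> \<alpha> \<beta> = upper_inc_Gamma (\<alpha> / \<beta>) ((x / \<sigma>) powr \<beta>)"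

lemma fig_density_eq: "fig_density x \<sigma> \<alpha> \<beta> \<nu> = fig_norm \<sigma> \<alpha> \<beta> \<nu> * x powr (\<nu> - 1) * fig_tail x \<sigma> \<alpha> \<beta>"
  by (simp add: fig_density_def fig_norm_def fig_tail_def)

lemma fig_norm_pos: "\<sigma> > 0 \<Longrightarrow> \<alpha> > 0 \<Longrightarrow> \<beta> > 0 \<Longrightarrow> \<nu> > 0 \<Longrightarrow> fig_norm \<sigma> \<alpha> \<beta> \<nu> > 0"
  unfolding fig_norm_def by (intro divide_pos_pos mult_pos_pos Gamma_real_pos) auto

lemma fig_tail_bounds_at_right_0:
  assumes "\<alpha> > 0" "\<beta> > 0" "\<sigma> > 0"
  shows "\<forall>\<^sub>F x in at_right 0. upper_inc_Gamma (\<alpha> / \<beta>) 1 \<le> fig_tail x \<sigma> \<alpha> \<beta>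
                               \<and> fig_tail x \<sigma> \<alpha> \<beta> \<le> upper_inc_Gamma (\<alpha> / \<beta>) 0"
proof -
  have "\<forall>\<^sub>F x in at_right 0. 0 < x \<and> x < \<sigma>"
    using assms by (auto simp: eventually_at_right_field)
  then show ?thesis
  proof eventually_elim
    case (elim x)
    then have "(x / \<sigma>) powr \<beta> \<le> 1" using assms by (intro powr_le1) auto
    then show ?case
      unfolding fig_tail_def using assms by (auto intro!: upper_inc_Gamma_antimono)
  qed
qed

lemma fig_tail_has_real_derivative:
  assumes "\<alpha> > 0" "\<beta> > 0" "\<sigma> > 0" "x > 0"
  shows "((\<lambda>x. fig_tail x \<sigma> \<alpha> \<beta>) has_real_derivative
           - (\<beta> / \<sigma> powr \<alpha>) * x powr (\<alpha> - 1) * exp (- (x powr \<beta> / \<sigma> powr \<beta>))) (at x)"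
proof -
  define y where "y = (x / \<sigma>) powr \<beta>"
  have inner: "((\<lambda>x. (x / \<sigma>) powr \<beta>) has_real_derivative \<beta> * (x / \<sigma>) powr (\<beta> - 1) / \<sigma>) (at x)"
    using assms by (auto intro!: derivative_eq_intros)
  have "((\<lambda>x. fig_tail x \<sigma> \<alpha> \<beta>) has_real_derivative
           - Gamma_integrand (\<alpha> / \<beta>) y * (\<beta> * (x / \<sigma>) powr (\<beta> - 1) / \<sigma>)) (at x)"
    unfolding y_def fig_tail_def using assms
    by (intro DERIV_chain2[OF upper_inc_Gamma_has_real_derivative inner]) auto
  moreover have "- Gamma_integrand (\<alpha> / \<beta>) y * (\<beta> * (x / \<sigma>) powr (\<beta> - 1) / \<sigma>)
      = - (\<beta> / \<sigma> powr \<alpha>) * x powr (\<alpha> - 1) * exp (- (x powr \<beta> / \<sigma> powr \<beta>))"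
  proof -
    have "y powr (\<alpha> / \<beta> - 1) * (x / \<sigma>) powr (\<beta> - 1) = (x / \<sigma>) powr (\<alpha> - 1)"
      using assms by (simp add: y_def powr_powr powr_add[symmetric] algebra_simps)
    also have "\<dots> = x powr (\<alpha> - 1) / \<sigma> powr \<alpha> * \<sigma>"
      using assms by (simp add: powr_divide powr_diff)
    finally show ?thesis
      using assms by (simp add: Gamma_integrand_def y_def powr_divide field_simps)
  qed
  ultimately show ?thesis by simp
qed

lemma fig_density_nu_le:
  assumes "\<sigma>1 > 0" "\<sigma>2 > 0" "\<alpha>1 > 0" "\<alpha>2 > 0" "\<beta>1 > 0" "\<beta>2 > 0" "\<nu>1 > 0" "\<nu>2 > 0"
    and "\<forall>x>0. fig_density x \<sigma>1 \<alpha>1 \<beta>1 \<nu>1 = fig_density x \<sigma>2 \<alpha>2 \<beta>2 \<nu>2"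
  shows "\<nu>1 \<le> \<nu>2"
proof -
  define N1 N2 where "N1 = fig_norm \<sigma>1 \<alpha>1 \<beta>1 \<nu>1" and "N2 = fig_norm \<sigma>2 \<alpha>2 \<beta>2 \<nu>2"
  have N: "N1 > 0" "N2 > 0" unfolding N1_def N2_def using assms by (simp_all add: fig_norm_pos)
  have pos: "upper_inc_Gamma (\<alpha>1 / \<beta>1) 1 > 0" "upper_inc_Gamma (\<alpha>2 / \<beta>2) 1 > 0"
    using assms by (simp_all add: upper_inc_Gamma_pos)
  have "\<nu>1 - 1 \<le> \<nu>2 - 1"
  proof (rule powr_exponent_le_at_right_0[where g="\<lambda>x. N1 * fig_tail x \<sigma>1 \<alpha>1 \<beta>1"
        and k="\<lambda>x. N2 * fig_tail x \<sigma>2 \<alpha>2 \<beta>2" and M="N1 * upper_inc_Gamma (\<alpha>1 / \<beta>1) 0"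
        and m="N2 * upper_inc_Gamma (\<alpha>2 / \<beta>2) 1"])
    show "\<forall>\<^sub>F x in at_right 0. x powr (\<nu>1 - 1) * (N1 * fig_tail x \<sigma>1 \<alpha>1 \<beta>1)
                             = x powr (\<nu>2 - 1) * (N2 * fig_tail x \<sigma>2 \<alpha>2 \<beta>2)"
      using eventually_at_right_less[of 0]
      by (rule eventually_mono) (use assms(9) in \<open>simp add: N1_def N2_def fig_density_eq algebra_simps\<close>)
    show "\<forall>\<^sub>F x in at_right 0. \<bar>N1 * fig_tail x \<sigma>1 \<alpha>1 \<beta>1\<bar> \<le> N1 * upper_inc_Gamma (\<alpha>1 / \<beta>1) 0"
      using fig_tail_bounds_at_right_0[OF assms(3,5,1)]
      by (rule eventually_mono) (use N pos in auto)
    show "\<forall>\<^sub>F x in at_right 0. N2 * upper_inc_Gamma (\<alpha>2 / \<beta>2) 1 \<le> N2 * fig_tail x \<sigma>2 \<alpha>2 \<beta>2"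
      using fig_tail_bounds_at_right_0[OF assms(4,6,2)]
      by (rule eventually_mono) (use N in auto)
  qed (use N pos in auto)
  then show ?thesis by simp
qed

theorem mainTheorem6:
  fixes \<sigma>1 \<sigma>2 \<alpha>1 \<alpha>2 \<beta>1 \<beta>2 \<nu>1 \<nu>2 :: real
  assumes "\<sigma>1 > 0" "\<sigma>2 > 0" "\<alpha>1 > 0" "\<alpha>2 > 0"
    and "\<beta>1 > 0" "\<beta>2 > 0" "\<nu>1 > 0" "\<nu>2 > 0"
    and "\<forall>x>0. fig_density x \<sigma>1 \<alpha>1 \<beta>1 \<nu>1 = fig_density x \<sigma>2 \<alpha>2 \<beta>2 \<nu>2"
  shows "\<sigma>1 = \<sigma>2 \<and> \<alpha>1 = \<alpha>2 \<and> \<beta>1 = \<beta>2 \<and> \<nu>1 = \<nu>2"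
proof -
  note pos = assms(1-8)
  have \<nu>: "\<nu>1 = \<nu>2"
    using fig_density_nu_le[OF pos assms(9)] fig_density_nu_le[OF pos(2,1,4,3,6,5,8,7)] assms(9) by force
  define N1 N2 where "N1 = fig_norm \<sigma>1 \<alpha>1 \<beta>1 \<nu>1" and "N2 = fig_norm \<sigma>2 \<alpha>2 \<beta>2 \<nu>2"
  have N: "N1 > 0" "N2 > 0" unfolding N1_def N2_def using pos by (simp_all add: fig_norm_pos)
  have tails: "\<forall>x\<in>{0<..}. N1 * fig_tail x \<sigma>1 \<alpha>1 \<beta>1 = N2 * fig_tail x \<sigma>2 \<alpha>2 \<beta>2"
    using assms(9) \<nu> by (simp add: fig_density_eq N1_def N2_def)
  have "\<forall>x>0. (N1 * \<beta>1 / \<sigma>1 powr \<alpha>1) * x powr (\<alpha>1 - 1) * exp (- (1 / \<sigma>1 powr \<beta>1) * x powr \<beta>1)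
        = (N2 * \<beta>2 / \<sigma>2 powr \<alpha>2) * x powr (\<alpha>2 - 1) * exp (- (1 / \<sigma>2 powr \<beta>2) * x powr \<beta>2)"
    using has_real_derivative_unique_on_open[OF _ _ tails
        DERIV_cmult[OF fig_tail_has_real_derivative] DERIV_cmult[OF fig_tail_has_real_derivative]] pos
    by (simp add: mult.assoc)
  then have "\<forall>x>0. (\<alpha>1 - 1) - (1 / \<sigma>1 powr \<beta>1 * \<beta>1) * x powr \<beta>1
                 = (\<alpha>2 - 1) - (1 / \<sigma>2 powr \<beta>2 * \<beta>2) * x powr \<beta>2"
    by (rule powr_exp_kernel_eq_imp_log_derivative_eq[rotated 2]) (use N pos in simp_all)
  then have "\<beta>1 = \<beta>2 \<and> 1 / \<sigma>1 powr \<beta>1 * \<beta>1 = 1 / \<sigma>2 powr \<beta>2 * \<beta>2 \<and> \<alpha>1 - 1 = \<alpha>2 - 1"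
    by (rule affine_powr_eq_imp_eq[rotated 2]) (use pos in simp_all)
  then have \<beta>: "\<beta>1 = \<beta>2" and \<alpha>: "\<alpha>1 = \<alpha>2" and "\<sigma>1 powr \<beta>1 = \<sigma>2 powr \<beta>1"
    using pos by (auto simp: field_simps)
  then have "(\<sigma>1 powr \<beta>1) powr (1 / \<beta>1) = (\<sigma>2 powr \<beta>1) powr (1 / \<beta>1)" by simp
  then have "\<sigma>1 = \<sigma>2" using pos by (simp add: powr_powr)
  with \<nu> \<alpha> \<beta> show ?thesis by simp
qed

end
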